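(* Let $n\ge 1$, $\lambda_s>0$, $\lambda>0$ and let $n_0\ge 2$. In the line network $L(n_0)$ (with parameter $n$), for every integer $i$ with $1\le i\le \frac{n_0}{2}$ we have $$\Delta^{\ell(n_0)}_{i+1}\le \Delta^{\ell(n_0)}_{i}.$$
   Context: Version-age model. A gossip network on a finite node set $\mathcal N$ is specified by source rates $\lambda_{0j}>0$ ($j\in\mathcal N$) and gossip rates $\lambda_{ij}\ge 0$ for ordered pairs $i\neq j$ in $\mathcal N$ ($\lambda_{ij}$ is the rate at which node $i$ sends updates to node $j$); $\lambda_s>0$ is the source's own update rate. For nonempty $S\subseteq\mathcal N$ let $N(S)=\{i\in\mathcal N\setminus S:\ \sum_{j\in S}\lambda_{ij}>0\}$. The version ages $\Delta_S$ ($\emptyset\neq S\subseteq\mathcal N$) are the numbers defined by $$\Delta_S=\frac{\lambda_s+\sum_{i\in N(S)}\big(\sum_{j\in S}\lambda_{ij}\big)\Delta_{S\cup\{i\}}}{\sum_{j\in S}\lambda_{0j}+\sum_{i\in N(S)}\sum_{j\in S}\lambda_{ij}},$$ which is well defined by downward induction on $|S|$ (all sets on the right are strictly larger than $S$). Write $\Delta_i=\Delta_{\{i\}}$. Line network $L(n_0)$ with parameter $n$: node set $\{1,\dots,n_0\}$, $\lambda_{0j}=\lambda/n$ for all $j$, $\lambda_{i,i+1}=\lambda_{i+1,i}=\lambda/2$ for $1\le i\le n_0-1$, and all other $\lambda_{ij}=0$. $\Delta^{\ell(n_0)}_i$ denotes $\Delta_i$ in this network. *)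

theory Defs
  imports Complex_Main
begin

text \<open>Gossip network: node set N, source rates l0 j, gossip rates l i j (node i to node j),
  source update rate ls.\<close>

definition nbr :: "nat set \<Rightarrow> (nat \<Rightarrow> nat \<Rightarrow> real) \<Rightarrow> nat set \<Rightarrow> nat set" where
  "nbr N l S = {i \<in> N - S. (\<Sum>j\<in>S. l i j) > 0}"

text \<open>Version-age recursion with a fuel argument; fuel (card N - card S + 1) suffices since
  every set on the right-hand side is one element larger (downward induction on |S|).\<close>
fun vage_aux :: "nat set \<Rightarrow> (nat \<Rightarrow> real) \<Rightarrow> (nat \<Rightarrow> nat \<Rightarrow> real) \<Rightarrow> real \<Rightarrow> nat \<Rightarrow> nat set \<Rightarrow> real" where
  "vage_aux N l0 l ls 0 S = 0"
| "vage_aux N l0 l ls (Suc k) S =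
     (ls + (\<Sum>i\<in>nbr N l S. (\<Sum>j\<in>S. l i j) * vage_aux N l0 l ls k (insert i S)))
     / ((\<Sum>j\<in>S. l0 j) + (\<Sum>i\<in>nbr N l S. \<Sum>j\<in>S. l i j))"

definition vage :: "nat set \<Rightarrow> (nat \<Rightarrow> real) \<Rightarrow> (nat \<Rightarrow> nat \<Rightarrow> real) \<Rightarrow> real \<Rightarrow> nat set \<Rightarrow> real" where
  "vage N l0 l ls S = vage_aux N l0 l ls (card N - card S + 1) S"

definition line_nodes :: "nat \<Rightarrow> nat set" where
  "line_nodes n0 = {1..n0}"

definition line_src :: "nat \<Rightarrow> real \<Rightarrow> nat \<Rightarrow> real" where
  "line_src n lam j = lam / real n"

definition line_gossip :: "real \<Rightarrow> nat \<Rightarrow> nat \<Rightarrow> real" where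
  "line_gossip lam i j = (if j = i + 1 \<or> i = j + 1 then lam / 2 else 0)"

definition line_age :: "nat \<Rightarrow> nat \<Rightarrow> real \<Rightarrow> real \<Rightarrow> nat \<Rightarrow> real" where
  "line_age n0 n lam ls i =
     vage (line_nodes n0) (line_src n lam) (line_gossip lam) ls {i}"

end

theory Submission
  imports Defs
begin

text \<open>On the line, the version age of a set depends only on the sets reachable from it by
  adding neighbours, and the sets reachable from an interval are again intervals. Write
  \<open>T L R\<close> for the age of the interval obtained by removing \<open>L\<close> nodes at the left end and
  \<open>R\<close> at the right end. The recursion for \<open>T\<close> is symmetric in \<open>L, R\<close>, and a simultaneous
  induction on \<open>L + R\<close> shows that removing more nodes increases the age and that, among
  intervals of equal length, the one closer to the centre has smaller age. The singletons
  \<open>{i + 1}\<close> and \<open>{i}\<close> are intervals of length one, and for \<open>2 i \<le> n\<^sub>0\<close> the first one is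
  the more central.\<close>

lemma vage_unfold:
  assumes "finite N" "S \<subseteq> N"
  shows "vage N l0 l ls S =
    (ls + (\<Sum>i\<in>nbr N l S. (\<Sum>j\<in>S. l i j) * vage N l0 l ls (insert i S)))
     / ((\<Sum>j\<in>S. l0 j) + (\<Sum>i\<in>nbr N l S. \<Sum>j\<in>S. l i j))"
proof -
  have "vage_aux N l0 l ls (card N - card S) (insert i S) = vage N l0 l ls (insert i S)"
    if "i \<in> nbr N l S" for i
  proof -
    from that have i: "i \<in> N" "i \<notin> S" by (auto simp: nbr_def)
    with assms have "S \<subset> N" by blast
    with assms(1) have "card S < card N" by (rule psubset_card_mono)
    moreover have "card (insert i S) = Suc (card S)"
      using i assms finite_subset by fastforce
    ultimately have "card N - card (insert i S) + 1 = card N - card S" by simp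
    then show ?thesis by (simp only: vage_def)
  qed
  then show ?thesis by (simp add: vage_def cong: sum.cong)
qed

lemma sum_line_gossip_interval:
  assumes "a \<le> b" "i \<notin> {a..b}"
  shows "(\<Sum>j\<in>{a..b}. line_gossip lam i j) = (if i + 1 = a \<or> i = b + 1 then lam / 2 else 0)"
proof -
  have "(\<Sum>j\<in>{a..b}. line_gossip lam i j) = (\<Sum>j\<in>{a..b} \<inter> {j. j = i + 1 \<or> i = j + 1}. lam / 2)"
    unfolding line_gossip_def by (simp add: sum.If_cases)
  also have "{a..b} \<inter> {j. j = i + 1 \<or> i = j + 1} =
      (if i + 1 = a then {a} else if i = b + 1 then {b} else {})"
    using assms by auto
  finally show ?thesis using assms by auto
qed

lemma nbr_line_interval:
  assumes "lam > 0" "1 \<le> a" "a \<le> b" "b \<le> n0"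
  shows "nbr {1..n0} (line_gossip lam) {a..b} =
    (if 1 < a then {a - 1} else {}) \<union> (if b < n0 then {b + 1} else {})"
  using assms sum_line_gossip_interval[OF assms(3)] by (auto simp: nbr_def split: if_splits)

lemma vage_line_interval:
  fixes n a b n0 :: nat and lam ls :: real
  assumes "lam > 0" "1 \<le> a" "a \<le> b" "b \<le> n0"
  defines "V \<equiv> vage {1..n0} (line_src n lam) (line_gossip lam) ls"
  shows "V {a..b} =
    (ls + (if 1 < a then lam / 2 * V {a - 1..b} else 0)
        + (if b < n0 then lam / 2 * V {a..b + 1} else 0))
    / (real (b + 1 - a) * lam / real n
        + (if 1 < a then lam / 2 else 0) + (if b < n0 then lam / 2 else 0))"
proof -
  have src: "(\<Sum>j\<in>{a..b}. line_src n lam j) = real (b + 1 - a) * lam / real n"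
    by (simp add: line_src_def)
  have "insert (a - 1) {a..b} = {a - 1..b}" if "1 < a" using that assms by auto
  moreover have "insert (b + 1) {a..b} = {a..b + 1}" using assms by auto
  moreover have "{a..b} \<subseteq> {1..n0}" using assms by auto
  ultimately show ?thesis
    unfolding V_def vage_unfold[OF finite_atLeastAtMost \<open>{a..b} \<subseteq> {1..n0}\<close>]
      nbr_line_interval[OF assms(1-4)]
    using assms by (auto simp: src sum_line_gossip_interval algebra_simps)
qed

definition trimmed_age :: "nat \<Rightarrow> nat \<Rightarrow> real \<Rightarrow> real \<Rightarrow> nat \<Rightarrow> nat \<Rightarrow> real" where
  "trimmed_age n0 n lam ls L R =
     vage (line_nodes n0) (line_src n lam) (line_gossip lam) ls {L + 1..n0 - R}"

definition boundary_rate :: "real \<Rightarrow> nat \<Rightarrow> real" where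
  "boundary_rate lam k = (if k = 0 then 0 else lam / 2)"

lemma boundary_rate_nonneg: "lam > 0 \<Longrightarrow> boundary_rate lam k \<ge> 0"
  by (simp add: boundary_rate_def)

text \<open>When \<open>L = 0\<close> the term \<open>T (L - 1) R\<close> is multiplied by the rate \<open>0\<close>, so truncated
  subtraction is harmless; likewise for \<open>R\<close>.\<close>

lemma trimmed_age_rec:
  fixes n L R n0 :: nat and lam ls :: real
  assumes "lam > 0" "L + R < n0"
  defines "T \<equiv> trimmed_age n0 n lam ls" and "h \<equiv> boundary_rate lam"
  shows "T L R =
    (ls + h L * T (L - 1) R + h R * T L (R - 1))
    / (real (n0 - L - R) * lam / real n + h L + h R)"
proof -
  have "n0 - (R - 1) = n0 - R + 1" if "0 < R" using that assms by simp
  moreover have "n0 - R + 1 - (L + 1) = n0 - L - R" by simp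
  ultimately show ?thesis
    unfolding T_def h_def trimmed_age_def line_nodes_def boundary_rate_def
    using assms vage_line_interval[OF assms(1), of "L + 1" "n0 - R" n0 n ls]
    by (auto simp: Suc_diff_le)
qed

lemma trimmed_age_denominator_pos:
  assumes "lam > 0" "n \<ge> 1" "L + R < n0"
  shows "real (n0 - L - R) * lam / real n + boundary_rate lam L + boundary_rate lam R > 0"
  using assms boundary_rate_nonneg[OF assms(1)]
  by (intro add_pos_nonneg) (auto simp: of_nat_diff)

lemma trimmed_age_balance:
  fixes n L R n0 :: nat and lam ls :: real
  assumes "lam > 0" "n \<ge> 1" "L + R < n0"
  defines "T \<equiv> trimmed_age n0 n lam ls" and "h \<equiv> boundary_rate lam"
  shows "T L R * (real (n0 - L - R) * lam / real n + h L + h R) =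
    ls + h L * T (L - 1) R + h R * T L (R - 1)"
  using trimmed_age_rec[OF assms(1,3)] trimmed_age_denominator_pos[OF assms(1-3)]
  unfolding T_def h_def by simp

lemma trimmed_age_pos:
  assumes "lam > 0" "ls > 0" "n \<ge> 1" "L + R < n0"
  shows "trimmed_age n0 n lam ls L R > 0"
  using assms(4)
proof (induction "L + R" arbitrary: L R rule: less_induct)
  case less
  have "boundary_rate lam L * trimmed_age n0 n lam ls (L - 1) R \<ge> 0"
    using less.hyps[of "L - 1" R] less.prems assms(1)
    by (auto simp: boundary_rate_def intro: mult_nonneg_nonneg less_imp_le)
  moreover have "boundary_rate lam R * trimmed_age n0 n lam ls L (R - 1) \<ge> 0"
    using less.hyps[of L "R - 1"] less.prems assms(1)
    by (auto simp: boundary_rate_def intro: mult_nonneg_nonneg less_imp_le)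
  ultimately show ?case
    using trimmed_age_rec[OF assms(1) less.prems]
      trimmed_age_denominator_pos[OF assms(1,3) less.prems] assms(2)
    by simp
qed

lemma trimmed_age_sym:
  assumes "lam > 0" "L + R < n0"
  shows "trimmed_age n0 n lam ls L R = trimmed_age n0 n lam ls R L"
  using assms(2)
proof (induction "L + R" arbitrary: L R rule: less_induct)
  case less
  let ?T = "trimmed_age n0 n lam ls" and ?h = "boundary_rate lam"
  have "?h L * ?T (L - 1) R = ?h L * ?T R (L - 1)"
    using less.hyps[of "L - 1" R] less.prems by (simp add: boundary_rate_def)
  moreover have "?h R * ?T L (R - 1) = ?h R * ?T (R - 1) L"
    using less.hyps[of L "R - 1"] less.prems by (simp add: boundary_rate_def)
  moreover have "n0 - L - R = n0 - R - L" by simp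
  ultimately have "(ls + ?h L * ?T (L - 1) R + ?h R * ?T L (R - 1))
      / (real (n0 - L - R) * lam / real n + ?h L + ?h R) =
    (ls + ?h R * ?T (R - 1) L + ?h L * ?T R (L - 1))
      / (real (n0 - R - L) * lam / real n + ?h R + ?h L)"
    by (simp only: ac_simps)
  with less.prems show ?case
    using trimmed_age_rec[OF assms(1), of L R] trimmed_age_rec[OF assms(1), of R L] by simp
qed

lemma trimmed_age_mono:
  assumes "lam > 0" "ls > 0" "n \<ge> 1" "L + Suc R < n0"
  shows "trimmed_age n0 n lam ls L R \<le> trimmed_age n0 n lam ls L (Suc R)"
  using assms(4)
proof (induction "L + R" arbitrary: L R rule: less_induct)
  case less
  let ?T = "trimmed_age n0 n lam ls" and ?h = "boundary_rate lam"
  define c where "c = real (n0 - L - Suc R) * lam / real n"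
  define c' where "c' = real (n0 - L - R) * lam / real n"
  have balance_R: "?T L R * (c' + ?h L + ?h R) = ls + ?h L * ?T (L - 1) R + ?h R * ?T L (R - 1)"
    unfolding c'_def using trimmed_age_balance[OF assms(1,3)] less.prems by simp
  have balance_Suc_R: "?T L (Suc R) * (c + ?h L + lam / 2) =
      ls + ?h L * ?T (L - 1) (Suc R) + lam / 2 * ?T L R"
    unfolding c_def using trimmed_age_balance[OF assms(1,3), of L "Suc R"] less.prems
    by (simp add: boundary_rate_def)
  have denominator_pos: "c + ?h L + lam / 2 > 0"
    unfolding c_def using trimmed_age_denominator_pos[OF assms(1,3), of L "Suc R"] less.prems
    by (simp add: boundary_rate_def)
  have "c \<le> c'"
    unfolding c_def c'_def using assms(1) by (intro divide_right_mono mult_right_mono) auto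
  then have "?T L R * c \<le> ?T L R * c'"
    using trimmed_age_pos[OF assms(1-3)] less.prems by (simp add: less_imp_le)
  moreover have "?h L * ?T (L - 1) R \<le> ?h L * ?T (L - 1) (Suc R)"
    using less.hyps[of "L - 1" R] less.prems assms(1) by (simp add: boundary_rate_def)
  moreover have "?h R * ?T L (R - 1) \<le> ?h R * ?T L R"
    using less.hyps[of L "R - 1"] less.prems assms(1) by (simp add: boundary_rate_def)
  ultimately have "?T L R * (c + ?h L + lam / 2) \<le> ?T L (Suc R) * (c + ?h L + lam / 2)"
    using balance_R balance_Suc_R by (simp add: algebra_simps)
  then show ?case using denominator_pos by (rule mult_right_le_imp_le)
qed

lemma trimmed_age_centred_le:
  assumes "lam > 0" "ls > 0" "n \<ge> 1" "L + Suc R < n0" "L \<le> R"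
  shows "trimmed_age n0 n lam ls (Suc L) R \<le> trimmed_age n0 n lam ls L (Suc R)"
  using assms(4,5)
proof (induction "L + R" arbitrary: L R rule: less_induct)
  case less
  let ?T = "trimmed_age n0 n lam ls" and ?h = "boundary_rate lam"
  show ?case
  proof (cases "L = R")
    case True
    then show ?thesis using trimmed_age_sym[OF assms(1), of "Suc L" L n0 n ls] less.prems by simp
  next
    case False
    with less.prems obtain Q where Q: "R = Suc Q" "L \<le> Q" by (cases R) auto
    define c where "c = real (n0 - L - Suc R) * lam / real n"
    have balance_inner: "?T (Suc L) R * (c + lam) = ls + lam / 2 * ?T L R + lam / 2 * ?T (Suc L) Q"
      unfolding c_def using trimmed_age_balance[OF assms(1,3), of "Suc L" R] less.prems Q
      by (simp add: boundary_rate_def ac_simps)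
    have balance_outer: "?T L (Suc R) * (c + ?h L + lam / 2) =
        ls + ?h L * ?T (L - 1) (Suc R) + lam / 2 * ?T L R"
      unfolding c_def using trimmed_age_balance[OF assms(1,3), of L "Suc R"] less.prems
      by (simp add: boundary_rate_def)
    have "c + lam > 0"
      unfolding c_def using assms(1) by (intro add_nonneg_pos) auto
    have "?T (Suc L) Q \<le> ?T L R"
      using less.hyps[of L Q] less.prems Q by simp
    also have "?T L R \<le> (if L = 0 then ?T L (Suc R) else ?T (L - 1) (Suc R))"
      using trimmed_age_mono[OF assms(1-3)] less.hyps[of "L - 1" R] less.prems by auto
    finally have "lam / 2 * ?T (Suc L) Q \<le>
        ?h L * ?T (L - 1) (Suc R) + (lam / 2 - ?h L) * ?T L (Suc R)"
      using assms(1) by (simp add: boundary_rate_def split: if_splits)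
    then have "?T (Suc L) R * (c + lam) \<le> ?T L (Suc R) * (c + lam)"
      using balance_inner balance_outer by (simp add: algebra_simps)
    then show ?thesis using \<open>c + lam > 0\<close> by (rule mult_right_le_imp_le)
  qed
qed

theorem theorem1:
  fixes n n0 i :: nat and ls lam :: real
  assumes "n \<ge> 1" and "ls > 0" and "lam > 0" and "n0 \<ge> 2"
    and "1 \<le> i" and "real i \<le> real n0 / 2"
  shows "line_age n0 n lam ls (i + 1) \<le> line_age n0 n lam ls i"
proof -
  have "2 * i \<le> n0" using assms(6) by linarith
  then have "line_age n0 n lam ls (i + 1) = trimmed_age n0 n lam ls (Suc (i - 1)) (n0 - i - 1)"
    and "line_age n0 n lam ls i = trimmed_age n0 n lam ls (i - 1) (Suc (n0 - i - 1))"
    unfolding line_age_def trimmed_age_def using assms(5) by simp_all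
  moreover have "trimmed_age n0 n lam ls (Suc (i - 1)) (n0 - i - 1) \<le>
      trimmed_age n0 n lam ls (i - 1) (Suc (n0 - i - 1))"
    using \<open>2 * i \<le> n0\<close> assms(5) by (intro trimmed_age_centred_le[OF assms(3,2,1)]) auto
  ultimately show ?thesis by simp
qed

end
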